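(* Let $\mathcal{X} \subseteq \mathbb{R}^m$ be countable and let $\widehat\nu = \sum_{j=1}^N \widehat\nu_j \delta_{\widehat x_j}$ be a probability mass function on $\mathcal{X}$ supported on $N$ distinct points $\widehat x_1,\dots,\widehat x_N \in \mathcal{X}$ with $\widehat\nu_j > 0$ for all $j$ and $\sum_j \widehat\nu_j = 1$. For $\varepsilon \ge 0$ let $\mathbb{B}_{\mathrm{KL}}(\widehat\nu,\varepsilon) = \{\nu \in \mathcal{M}(\mathcal{X}) : \mathrm{KL}(\widehat\nu \parallel \nu) \le \varepsilon\}$. Then for any $\varepsilon \ge 0$ and any $x \in \mathcal{X}$ there exists a measure $\nu^\star_{\mathrm{KL}} \in \mathbb{B}_{\mathrm{KL}}(\widehat\nu,\varepsilon)$ such that $$\sup_{\nu \in \mathbb{B}_{\mathrm{KL}}(\widehat\nu,\varepsilon)} \nu(x) = \nu^\star_{\mathrm{KL}}(x).$$ Moreover, $\nu^\star_{\mathrm{KL}}$ is supported on at most $N+1$ points and satisfies $\mathrm{supp}(\nu^\star_{\mathrm{KL}}) \subseteq \mathrm{supp}(\widehat\nu) \cup \{x\}$.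
   Context: $\mathcal{M}(\mathcal{X})$ is the set of probability mass functions supported on $\mathcal{X}$; $\delta_z$ is the Dirac measure at $z$. For $\nu_1,\nu_2 \in \mathcal{M}(\mathcal{X})$ with $\nu_1$ absolutely continuous with respect to $\nu_2$, the Kullback–Leibler divergence is $\mathrm{KL}(\nu_1 \parallel \nu_2) = \sum_{z \in \mathcal{X}} f(\nu_1(z)/\nu_2(z))\,\nu_2(z)$ with $f(t) = t\log t - t + 1$ (so $f(0)=1$). *)

theory Defs
  imports "HOL-Probability.Probability"
begin

definition kl_f :: "real \<Rightarrow> real" where
  "kl_f t = t * ln t - t + 1"

definition pmfs_on :: "'a set \<Rightarrow> 'a pmf set" where
  "pmfs_on X = {\<nu>. set_pmf \<nu> \<subseteq> X}"

text \<open>KL(nu1 || nu2) = sum over z in X of f(nu1 z / nu2 z) * nu2 z, as an extended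
  nonnegative real (all terms are nonnegative, so the sum always exists).\<close>
definition KL :: "'a set \<Rightarrow> 'a pmf \<Rightarrow> 'a pmf \<Rightarrow> ennreal" where
  "KL X \<nu>1 \<nu>2 = (\<integral>\<^sup>+ z. ennreal (kl_f (pmf \<nu>1 z / pmf \<nu>2 z) * pmf \<nu>2 z) \<partial>count_space X)"

definition abs_cont :: "'a pmf \<Rightarrow> 'a pmf \<Rightarrow> bool" where
  "abs_cont \<nu>1 \<nu>2 \<longleftrightarrow> (\<forall>z. pmf \<nu>2 z = 0 \<longrightarrow> pmf \<nu>1 z = 0)"

definition KL_ball :: "'a set \<Rightarrow> 'a pmf \<Rightarrow> real \<Rightarrow> 'a pmf set" where
  "KL_ball X \<nu>h \<epsilon> = {\<nu> \<in> pmfs_on X. abs_cont \<nu>h \<nu> \<and> KL X \<nu>h \<nu> \<le> ennreal \<epsilon>}"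

end

theory Submission
  imports Defs "HOL-Real_Asymp.Real_Asymp"
begin

(* Write p for the mass of the nominal pmf at x. For a finitely supported nominal pmf the KL
   divergence is the usual sum of p_z ln(p_z / q_z), and coarse-graining to the two cells {x} and
   its complement can only decrease it (log-sum inequality). Hence every pmf in the ball has mass
   s at x with binary_kl p s <= eps, where binary_kl p is the KL divergence between Bernoulli
   distributions. This function vanishes at p, increases strictly on [p, 1) and tends to infinity
   at 1, so these s are bounded by the solution t of binary_kl p t = eps. The bound is attained
   by giving x the mass t and rescaling the nominal pmf on the other points, a pmf whose
   divergence from the nominal one is exactly binary_kl p t. *)

lemma kl_f_nonneg:
  assumes "t \<ge> 0"
  shows "kl_f t \<ge> 0"
proof (cases "t = 0")
  case False
  with assms have t: "t > 0" by simp
  have "ln (1 / t) \<le> 1 / t - 1"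
    using t by (intro ln_le_minus_one) simp
  then have "t * (- ln t) \<le> t * (1 / t - 1)"
    using t by (intro mult_left_mono) (auto simp: ln_div)
  then show ?thesis
    using t by (simp add: kl_f_def algebra_simps)
qed (simp add: kl_f_def)

lemma log_sum_inequality:
  fixes a b :: "'a \<Rightarrow> real"
  assumes "finite B" "B \<noteq> {}" "\<And>z. z \<in> B \<Longrightarrow> a z > 0" "\<And>z. z \<in> B \<Longrightarrow> b z > 0"
  shows "(\<Sum>z\<in>B. a z) * (ln (\<Sum>z\<in>B. a z) - ln (\<Sum>z\<in>B. b z))
           \<le> (\<Sum>z\<in>B. a z * (ln (a z) - ln (b z)))"
proof -
  define q where "q = (\<Sum>z\<in>B. a z)"
  define c where "c = (\<Sum>z\<in>B. b z)"
  have q: "q > 0" and c: "c > 0"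
    unfolding q_def c_def using assms by (auto intro!: sum_pos)
  have term_le: "a z * (ln q - ln c) - a z * (ln (a z) - ln (b z)) \<le> b z * q / c - a z"
    if "z \<in> B" for z
  proof -
    have az: "a z > 0" and bz: "b z > 0"
      using assms that by auto
    have "ln (b z * q / (a z * c)) = (ln q - ln c) - (ln (a z) - ln (b z))"
      using az bz q c by (simp add: ln_div ln_mult)
    moreover have "ln (b z * q / (a z * c)) \<le> b z * q / (a z * c) - 1"
      using az bz q c by (intro ln_le_minus_one) simp
    ultimately have "a z * ((ln q - ln c) - (ln (a z) - ln (b z))) \<le> a z * (b z * q / (a z * c) - 1)"
      using az by (intro mult_left_mono) auto
    also have "\<dots> = b z * q / c - a z"
      using az c by (simp add: field_simps)
    finally show ?thesis
      by (simp add: right_diff_distrib)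
  qed
  have "q * (ln q - ln c) - (\<Sum>z\<in>B. a z * (ln (a z) - ln (b z)))
          = (\<Sum>z\<in>B. a z * (ln q - ln c) - a z * (ln (a z) - ln (b z)))"
    unfolding q_def by (simp add: sum_subtractf sum_distrib_right)
  also have "\<dots> \<le> (\<Sum>z\<in>B. b z * q / c - a z)"
    by (rule sum_mono) (rule term_le)
  also have "\<dots> = 0"
    using c unfolding q_def c_def
    by (simp add: sum_subtractf sum_divide_distrib[symmetric] sum_distrib_right[symmetric])
  finally show ?thesis
    unfolding q_def c_def by simp
qed

definition binary_kl :: "real \<Rightarrow> real \<Rightarrow> real" where
  "binary_kl p t = p * (ln p - ln t) + (1 - p) * (ln (1 - p) - ln (1 - t))"

lemma binary_kl_self [simp]: "binary_kl p p = 0"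
  by (simp add: binary_kl_def)

lemma continuous_on_binary_kl:
  assumes "0 \<le> p" "b < 1"
  shows "continuous_on {p..b} (binary_kl p)"
proof (cases "p = 0")
  case True
  then have "binary_kl p = (\<lambda>t. - ln (1 - t))"
    by (simp add: binary_kl_def fun_eq_iff)
  with assms show ?thesis
    by (simp, intro continuous_intros) auto
next
  case False
  then show ?thesis
    using assms unfolding binary_kl_def by (intro continuous_intros) auto
qed

lemma binary_kl_strict_mono:
  assumes "0 \<le> p" "p \<le> a" "a < b" "b < 1"
  shows "binary_kl p a < binary_kl p b"
proof (rule DERIV_pos_imp_increasing_open[OF \<open>a < b\<close>])
  fix t assume t: "a < t" "t < b"
  have "(binary_kl p has_real_derivative p * - (1 / t) + (1 - p) * (1 / (1 - t))) (at t)"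
    unfolding binary_kl_def using assms t by (auto intro!: derivative_eq_intros)
  moreover have "p * - (1 / t) + (1 - p) * (1 / (1 - t)) = (t - p) / (t * (1 - t))"
    using assms t by (simp add: field_simps)
  moreover have "(t - p) / (t * (1 - t)) > 0"
    using assms t by (intro divide_pos_pos mult_pos_pos) auto
  ultimately show "\<exists>y. (binary_kl p has_real_derivative y) (at t) \<and> 0 < y"
    by auto
next
  show "continuous_on {a..b} (binary_kl p)"
    using assms by (intro continuous_on_subset[OF continuous_on_binary_kl[of p b]]) auto
qed

lemma binary_kl_tendsto_at_top:
  assumes "0 \<le> p" "p < 1"
  shows "filterlim (binary_kl p) at_top (at_left 1)"
  using assms unfolding binary_kl_def by real_asymp

lemma binary_kl_level:
  assumes "0 \<le> p" "p < 1" "0 \<le> \<epsilon>"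
  obtains t where "p \<le> t" "t < 1" "binary_kl p t = \<epsilon>"
    and "\<And>s. p \<le> s \<Longrightarrow> s < 1 \<Longrightarrow> binary_kl p s \<le> \<epsilon> \<Longrightarrow> s \<le> t"
proof -
  have "eventually (\<lambda>b. \<epsilon> \<le> binary_kl p b \<and> b \<in> {p<..<1}) (at_left 1)"
    using binary_kl_tendsto_at_top[OF assms(1,2)] eventually_at_left_real[OF assms(2)]
    by (auto simp: filterlim_at_top intro: eventually_conj)
  then obtain b where b: "\<epsilon> \<le> binary_kl p b" "p < b" "b < 1"
    using eventually_happens by fastforce
  then obtain t where t: "p \<le> t" "t \<le> b" "binary_kl p t = \<epsilon>"
    using IVT'[of "binary_kl p" p \<epsilon> b] continuous_on_binary_kl[of p b] assms by auto
  have "s \<le> t" if "p \<le> s" "s < 1" "binary_kl p s \<le> \<epsilon>" for s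
    using binary_kl_strict_mono[of p t s] assms t that by force
  with t b that show ?thesis
    by simp
qed

lemma abs_cont_iff_set_pmf_subset: "abs_cont \<nu>1 \<nu>2 \<longleftrightarrow> set_pmf \<nu>1 \<subseteq> set_pmf \<nu>2"
  by (auto simp: abs_cont_def set_pmf_iff)

lemma sum_pmf_Diff_singleton:
  assumes "finite (set_pmf \<nu>)"
  shows "(\<Sum>z\<in>set_pmf \<nu> - {x}. pmf \<nu> z) = 1 - pmf \<nu> x"
  using assms sum_pmf_eq_1[OF assms order_refl] by (simp add: sum_diff1 set_pmf_iff)

lemma sum_set_pmf_remove:
  assumes "finite (set_pmf \<nu>)"
  shows "(\<Sum>z\<in>set_pmf \<nu>. pmf \<nu> z * g z) = (\<Sum>z\<in>set_pmf \<nu> - {x}. pmf \<nu> z * g z) + pmf \<nu> x * g x"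
  using assms by (cases "x \<in> set_pmf \<nu>") (simp_all add: sum_diff1 set_pmf_iff)

lemma set_pmf_Diff_singleton_nonempty:
  assumes "pmf \<nu> x < 1"
  shows "set_pmf \<nu> - {x} \<noteq> {}"
  using assms set_pmf_subset_singleton[of \<nu> x] by auto

lemma pmf_less_1_if_abs_cont:
  assumes "abs_cont \<nu>1 \<nu>2" "pmf \<nu>1 x < 1"
  shows "pmf \<nu>2 x < 1"
proof -
  obtain z where z: "z \<in> set_pmf \<nu>1" "z \<noteq> x"
    using set_pmf_Diff_singleton_nonempty[OF assms(2)] by blast
  with assms(1) have "pmf \<nu>2 z > 0"
    by (auto simp: abs_cont_iff_set_pmf_subset pmf_positive)
  moreover have "pmf \<nu>2 x + pmf \<nu>2 z \<le> 1"
    using measure_pmf.prob_le_1[of \<nu>2 "{x, z}"] z(2) by (simp add: measure_measure_pmf_finite)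
  ultimately show ?thesis
    by simp
qed

lemma KL_eq_sum_ln:
  assumes fin: "finite (set_pmf \<nu>1)" and X1: "set_pmf \<nu>1 \<subseteq> X" and X2: "set_pmf \<nu>2 \<subseteq> X"
    and ac: "abs_cont \<nu>1 \<nu>2"
  shows "KL X \<nu>1 \<nu>2 = ennreal (\<Sum>z\<in>set_pmf \<nu>1. pmf \<nu>1 z * (ln (pmf \<nu>1 z) - ln (pmf \<nu>2 z)))"
proof -
  define A where "A = set_pmf \<nu>1"
  define F where "F z = ennreal (kl_f (pmf \<nu>1 z / pmf \<nu>2 z) * pmf \<nu>2 z)" for z
  define T where "T z = pmf \<nu>1 z * (ln (pmf \<nu>1 z) - ln (pmf \<nu>2 z)) - pmf \<nu>1 z + pmf \<nu>2 z" for z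
  have F_A: "F z = ennreal (T z)" and T_nonneg: "T z \<ge> 0" if "z \<in> A" for z
  proof -
    have "pmf \<nu>1 z > 0" "pmf \<nu>2 z > 0"
      using that ac by (auto simp: A_def abs_cont_iff_set_pmf_subset pmf_positive)
    then have "kl_f (pmf \<nu>1 z / pmf \<nu>2 z) * pmf \<nu>2 z = T z"
      by (simp add: kl_f_def T_def ln_div field_simps)
    moreover have "kl_f (pmf \<nu>1 z / pmf \<nu>2 z) * pmf \<nu>2 z \<ge> 0"
      by (simp add: kl_f_nonneg)
    ultimately show "F z = ennreal (T z)" "T z \<ge> 0"
      by (simp_all add: F_def)
  qed
  have F_not_A: "F z = ennreal (pmf \<nu>2 z)" if "z \<notin> A" for z
    using that by (simp add: F_def A_def kl_f_def set_pmf_iff)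
  have sum_\<nu>2: "(\<Sum>z\<in>A. pmf \<nu>2 z) \<le> 1"
    using fin measure_pmf.prob_le_1[of \<nu>2 A] by (simp add: A_def measure_measure_pmf_finite)
  have "KL X \<nu>1 \<nu>2 = (\<integral>\<^sup>+ z. F z * indicator A z + F z * indicator (X - A) z \<partial>count_space UNIV)"
    unfolding KL_def F_def using X1
    by (subst nn_integral_count_space_indicator) (auto intro!: nn_integral_cong simp: A_def indicator_def)
  also have "\<dots> = (\<integral>\<^sup>+ z. F z \<partial>count_space A) + (\<integral>\<^sup>+ z. ennreal (pmf \<nu>2 z) \<partial>count_space (X - A))"
    by (simp add: nn_integral_add nn_integral_count_space_indicator[symmetric] F_not_A
          cong: nn_integral_cong_simp)
  also have "(\<integral>\<^sup>+ z. F z \<partial>count_space A) = ennreal (\<Sum>z\<in>A. T z)"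
    using fin F_A T_nonneg by (simp add: A_def nn_integral_count_space_finite)
  also have "(\<integral>\<^sup>+ z. ennreal (pmf \<nu>2 z) \<partial>count_space (X - A)) = ennreal (1 - (\<Sum>z\<in>A. pmf \<nu>2 z))"
  proof -
    have "measure_pmf.prob \<nu>2 (X - A) = measure_pmf.prob \<nu>2 X - measure_pmf.prob \<nu>2 A"
      using X1 by (intro measure_pmf.finite_measure_Diff) (auto simp: A_def)
    moreover have "measure_pmf.prob \<nu>2 X = 1"
      using X2 by (simp add: measure_pmf.prob_eq_1 AE_measure_pmf_iff subset_eq)
    ultimately show ?thesis
      using fin by (simp add: nn_integral_pmf measure_pmf.emeasure_eq_measure measure_measure_pmf_finite A_def)
  qed
  also have "ennreal (\<Sum>z\<in>A. T z) + ennreal (1 - (\<Sum>z\<in>A. pmf \<nu>2 z))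
      = ennreal ((\<Sum>z\<in>A. T z) + 1 - (\<Sum>z\<in>A. pmf \<nu>2 z))"
    using T_nonneg sum_\<nu>2 by (subst ennreal_plus[symmetric]) (auto intro: sum_nonneg simp: algebra_simps)
  also have "(\<Sum>z\<in>A. T z) + 1 - (\<Sum>z\<in>A. pmf \<nu>2 z) = (\<Sum>z\<in>A. pmf \<nu>1 z * (ln (pmf \<nu>1 z) - ln (pmf \<nu>2 z)))"
    using sum_pmf_eq_1[OF fin order_refl] by (simp add: T_def A_def sum.distrib sum_subtractf)
  finally show ?thesis
    unfolding A_def .
qed

lemma KL_ball_center:
  assumes "finite (set_pmf \<nu>)" "set_pmf \<nu> \<subseteq> X" "0 \<le> \<epsilon>"
  shows "\<nu> \<in> KL_ball X \<nu> \<epsilon>"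
  using assms KL_eq_sum_ln[of \<nu> X \<nu>]
  by (simp add: KL_ball_def pmfs_on_def abs_cont_iff_set_pmf_subset)

lemma binary_kl_le_KL:
  assumes fin: "finite (set_pmf \<nu>1)" and X1: "set_pmf \<nu>1 \<subseteq> X" and X2: "set_pmf \<nu>2 \<subseteq> X"
    and ac: "abs_cont \<nu>1 \<nu>2" and p1: "pmf \<nu>1 x < 1"
  shows "ennreal (binary_kl (pmf \<nu>1 x) (pmf \<nu>2 x)) \<le> KL X \<nu>1 \<nu>2"
proof -
  define A where "A = set_pmf \<nu>1"
  define B where "B = A - {x}"
  define p where "p = pmf \<nu>1 x"
  define s where "s = pmf \<nu>2 x"
  define c where "c = (\<Sum>z\<in>B. pmf \<nu>2 z)"
  define h where "h z = pmf \<nu>1 z * (ln (pmf \<nu>1 z) - ln (pmf \<nu>2 z))" for z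
  have pos1: "pmf \<nu>1 z > 0" and pos2: "pmf \<nu>2 z > 0" if "z \<in> A" for z
    using that ac by (auto simp: A_def abs_cont_iff_set_pmf_subset pmf_positive)
  have finB: "finite B" and B_ne: "B \<noteq> {}"
    using fin set_pmf_Diff_singleton_nonempty[OF p1] by (auto simp: A_def B_def)
  have sum_A: "(\<Sum>z\<in>A. h z) = (\<Sum>z\<in>B. h z) + p * (ln p - ln s)"
    using sum_set_pmf_remove[OF fin, of _ x] by (simp add: A_def B_def p_def s_def h_def)
  have "c > 0"
    unfolding c_def using finB B_ne pos2 by (intro sum_pos) (auto simp: B_def)
  have "s + c = measure_pmf.prob \<nu>2 (insert x B)"
    using finB by (simp add: s_def c_def B_def measure_measure_pmf_finite sum.insert_remove)
  then have "c \<le> 1 - s"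
    using measure_pmf.prob_le_1[of \<nu>2 "insert x B"] by linarith
  with \<open>c > 0\<close> p1 have "(1 - p) * (ln (1 - p) - ln (1 - s)) \<le> (1 - p) * (ln (1 - p) - ln c)"
    by (intro mult_left_mono) (auto simp: p_def)
  also have "\<dots> \<le> (\<Sum>z\<in>B. h z)"
    using log_sum_inequality[OF finB B_ne, of "pmf \<nu>1" "pmf \<nu>2"] pos1 pos2
      sum_pmf_Diff_singleton[OF fin, of x]
    by (simp add: A_def B_def c_def h_def p_def)
  finally have "binary_kl p s \<le> (\<Sum>z\<in>A. h z)"
    unfolding sum_A binary_kl_def by simp
  then show ?thesis
    using KL_eq_sum_ln[OF fin X1 X2 ac] by (simp add: A_def h_def p_def s_def ennreal_leI)
qed

definition assign_mass_pmf :: "'a pmf \<Rightarrow> 'a \<Rightarrow> real \<Rightarrow> 'a pmf" where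
  "assign_mass_pmf \<nu> x t = embed_pmf (\<lambda>z. if z = x then t else (1 - t) / (1 - pmf \<nu> x) * pmf \<nu> z)"

lemma pmf_assign_mass_pmf:
  assumes "0 \<le> t" "t \<le> 1" "pmf \<nu> x < 1"
  shows "pmf (assign_mass_pmf \<nu> x t) z = (if z = x then t else (1 - t) / (1 - pmf \<nu> x) * pmf \<nu> z)"
  unfolding assign_mass_pmf_def
proof (rule pmf_embed_pmf)
  define c where "c = (1 - t) / (1 - pmf \<nu> x)"
  have "c \<ge> 0"
    using assms by (simp add: c_def)
  then show "0 \<le> (if z = x then t else c * pmf \<nu> z)" for z
    using assms by simp
  have "(\<integral>\<^sup>+ z. ennreal (if z = x then t else c * pmf \<nu> z) \<partial>count_space UNIV)
      = (\<integral>\<^sup>+ z. ennreal t * indicator {x} z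
                 + ennreal c * (ennreal (pmf \<nu> z) * indicator (- {x}) z) \<partial>count_space UNIV)"
    using \<open>c \<ge> 0\<close> by (intro nn_integral_cong) (auto simp: indicator_def ennreal_mult)
  also have "\<dots> = ennreal t + ennreal c * emeasure (measure_pmf \<nu>) (- {x})"
    by (simp add: nn_integral_add nn_integral_cmult nn_integral_count_space_indicator[symmetric]
        nn_integral_pmf)
  also have "emeasure (measure_pmf \<nu>) (- {x}) = ennreal (1 - pmf \<nu> x)"
    using measure_pmf.prob_compl[of "{x}" \<nu>]
    by (simp add: measure_pmf.emeasure_eq_measure measure_pmf_single Compl_eq_Diff_UNIV)
  also have "ennreal t + ennreal c * ennreal (1 - pmf \<nu> x) = ennreal (t + c * (1 - pmf \<nu> x))"
    using assms \<open>c \<ge> 0\<close> by (simp add: ennreal_mult)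
  also have "t + c * (1 - pmf \<nu> x) = 1"
    using assms by (simp add: c_def)
  finally show "(\<integral>\<^sup>+ z. ennreal (if z = x then t else c * pmf \<nu> z) \<partial>count_space UNIV) = 1"
    by simp
qed

lemma set_pmf_assign_mass_pmf:
  assumes "0 \<le> t" "t \<le> 1" "pmf \<nu> x < 1"
  shows "set_pmf (assign_mass_pmf \<nu> x t) \<subseteq> set_pmf \<nu> \<union> {x}"
  using assms by (auto simp: set_pmf_iff pmf_assign_mass_pmf split: if_splits)

lemma abs_cont_assign_mass_pmf:
  assumes "pmf \<nu> x \<le> t" "t < 1"
  shows "abs_cont \<nu> (assign_mass_pmf \<nu> x t)"
proof -
  have "0 \<le> t" "pmf \<nu> x < 1"
    using assms pmf_nonneg[of \<nu> x] by linarith+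
  with assms show ?thesis
    by (auto simp: abs_cont_def pmf_assign_mass_pmf split: if_splits)
qed

lemma KL_assign_mass_pmf:
  assumes fin: "finite (set_pmf \<nu>)" and "set_pmf \<nu> \<subseteq> X" "x \<in> X"
    and t: "pmf \<nu> x \<le> t" "t < 1"
  shows "KL X \<nu> (assign_mass_pmf \<nu> x t) = ennreal (binary_kl (pmf \<nu> x) t)"
proof -
  define p where "p = pmf \<nu> x"
  define c where "c = (1 - t) / (1 - p)"
  define h where "h z = pmf \<nu> z * (ln (pmf \<nu> z) - ln (pmf (assign_mass_pmf \<nu> x t) z))" for z
  have "0 \<le> p"
    by (simp add: p_def)
  with t have "p < 1" "0 \<le> t" "c > 0"
    by (auto simp: c_def simp flip: p_def)
  then have pmf_t: "pmf (assign_mass_pmf \<nu> x t) z = (if z = x then t else c * pmf \<nu> z)" for z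
    using t by (simp add: pmf_assign_mass_pmf p_def c_def)
  have "h z = pmf \<nu> z * - ln c" if "z \<in> set_pmf \<nu> - {x}" for z
    using that \<open>c > 0\<close> by (simp add: h_def pmf_t ln_mult pmf_positive)
  then have "(\<Sum>z\<in>set_pmf \<nu> - {x}. h z) = (1 - p) * - ln c"
    using sum_pmf_Diff_singleton[OF fin, of x] by (simp add: sum_negf sum_distrib_right[symmetric] p_def)
  also have "\<dots> = (1 - p) * (ln (1 - p) - ln (1 - t))"
    using \<open>p < 1\<close> t by (simp add: c_def ln_div)
  finally have "(\<Sum>z\<in>set_pmf \<nu>. h z) = binary_kl p t"
    using sum_set_pmf_remove[OF fin, of _ x] by (simp add: binary_kl_def h_def pmf_t p_def)
  moreover have "set_pmf (assign_mass_pmf \<nu> x t) \<subseteq> X"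
    using set_pmf_assign_mass_pmf[of t \<nu> x] assms \<open>0 \<le> t\<close> \<open>p < 1\<close> by (auto simp: p_def)
  ultimately show ?thesis
    using KL_eq_sum_ln[OF fin assms(2) _ abs_cont_assign_mass_pmf[OF t]] by (simp add: h_def p_def)
qed

lemma KL_ball_pmf_maximiser:
  assumes fin: "finite (set_pmf \<nu>h)" and X: "set_pmf \<nu>h \<subseteq> X" "x \<in> X" and "0 \<le> \<epsilon>"
  obtains \<nu>s where "\<nu>s \<in> KL_ball X \<nu>h \<epsilon>" "\<forall>\<nu>\<in>KL_ball X \<nu>h \<epsilon>. pmf \<nu> x \<le> pmf \<nu>s x"
    "set_pmf \<nu>s \<subseteq> set_pmf \<nu>h \<union> {x}"
proof (cases "pmf \<nu>h x = 1")
  case True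
  then show ?thesis
    using that[of \<nu>h] KL_ball_center[OF fin X(1) \<open>0 \<le> \<epsilon>\<close>] by (auto simp: pmf_le_1)
next
  case False
  define p where "p = pmf \<nu>h x"
  have p: "0 \<le> p" "p < 1"
    using False pmf_le_1[of \<nu>h x] by (auto simp: p_def)
  obtain t where t: "p \<le> t" "t < 1" "binary_kl p t = \<epsilon>"
    and t_max: "\<And>s. p \<le> s \<Longrightarrow> s < 1 \<Longrightarrow> binary_kl p s \<le> \<epsilon> \<Longrightarrow> s \<le> t"
    using binary_kl_level[OF p \<open>0 \<le> \<epsilon>\<close>] by blast
  define \<nu>s where "\<nu>s = assign_mass_pmf \<nu>h x t"
  have "0 \<le> t"
    using p t by linarith
  with p t have pmf_\<nu>s_x: "pmf \<nu>s x = t"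
    by (simp add: \<nu>s_def pmf_assign_mass_pmf flip: p_def)
  have supp: "set_pmf \<nu>s \<subseteq> set_pmf \<nu>h \<union> {x}"
    using set_pmf_assign_mass_pmf[of t \<nu>h x] p t by (simp add: \<nu>s_def p_def)
  have "\<nu>s \<in> KL_ball X \<nu>h \<epsilon>"
    using supp X t KL_assign_mass_pmf[OF fin X, of t] abs_cont_assign_mass_pmf[of \<nu>h x t]
    by (auto simp: KL_ball_def pmfs_on_def \<nu>s_def p_def)
  moreover have "pmf \<nu> x \<le> pmf \<nu>s x" if \<nu>: "\<nu> \<in> KL_ball X \<nu>h \<epsilon>" for \<nu>
  proof (cases "pmf \<nu> x \<le> p")
    case False
    have "set_pmf \<nu> \<subseteq> X" "abs_cont \<nu>h \<nu>" "KL X \<nu>h \<nu> \<le> ennreal \<epsilon>"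
      using \<nu> by (auto simp: KL_ball_def pmfs_on_def)
    then have "binary_kl p (pmf \<nu> x) \<le> \<epsilon>" and "pmf \<nu> x < 1"
      using binary_kl_le_KL[OF fin X(1), of \<nu> x] pmf_less_1_if_abs_cont[of \<nu>h \<nu> x] p \<open>0 \<le> \<epsilon>\<close>
      by (auto simp: p_def dest: order_trans)
    then show ?thesis
      using t_max[of "pmf \<nu> x"] False pmf_\<nu>s_x by simp
  qed (use t pmf_\<nu>s_x in simp)
  ultimately show ?thesis
    using that supp by blast
qed

theorem mainTheorem2:
  fixes X :: "(real ^ 'm) set" and \<nu>h :: "(real ^ 'm) pmf" and N :: nat
    and xh :: "nat \<Rightarrow> real ^ 'm" and w :: "nat \<Rightarrow> real"
    and \<epsilon> :: real and x :: "real ^ 'm"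
  assumes "countable X"
    and "inj_on xh {..<N}"
    and "xh ` {..<N} \<subseteq> X"
    and "\<forall>j<N. w j > 0"
    and "(\<Sum>j<N. w j) = 1"
    and "\<forall>z. pmf \<nu>h z = (\<Sum>j<N. if xh j = z then w j else 0)"
    and "\<epsilon> \<ge> 0"
    and "x \<in> X"
  shows "\<exists>\<nu>s \<in> KL_ball X \<nu>h \<epsilon>.
           (SUP \<nu>\<in>KL_ball X \<nu>h \<epsilon>. pmf \<nu> x) = pmf \<nu>s x
         \<and> card (set_pmf \<nu>s) \<le> N + 1
         \<and> set_pmf \<nu>s \<subseteq> set_pmf \<nu>h \<union> {x}"
proof -
  have supp: "set_pmf \<nu>h \<subseteq> xh ` {..<N}"
    using assms(6) by (force simp: set_pmf_iff intro: sum.neutral)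
  then have fin: "finite (set_pmf \<nu>h)" and card: "card (set_pmf \<nu>h) \<le> N"
    using card_mono[OF _ supp] card_image_le[of "{..<N}" xh] by (auto intro: finite_subset)
  obtain \<nu>s where \<nu>s: "\<nu>s \<in> KL_ball X \<nu>h \<epsilon>" "\<forall>\<nu>\<in>KL_ball X \<nu>h \<epsilon>. pmf \<nu> x \<le> pmf \<nu>s x"
    and supp_\<nu>s: "set_pmf \<nu>s \<subseteq> set_pmf \<nu>h \<union> {x}"
    using KL_ball_pmf_maximiser[OF fin _ \<open>x \<in> X\<close> \<open>\<epsilon> \<ge> 0\<close>] supp assms(3) by blast
  have "(SUP \<nu>\<in>KL_ball X \<nu>h \<epsilon>. pmf \<nu> x) = pmf \<nu>s x"
    using \<nu>s by (intro cSup_eq_maximum) auto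
  moreover have "card (set_pmf \<nu>s) \<le> N + 1"
    using card_mono[OF _ supp_\<nu>s] fin card by (simp add: card_insert_if split: if_splits)
  ultimately show ?thesis
    using \<nu>s supp_\<nu>s by blast
qed

end
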